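(* Let $\theta,\theta'$ be real antisymmetric $n\times n$ matrices and $l\ge 1$. Let $\bar C^l\subset C^l=\mathrm{Hom}(B^l(A_\theta),A_{\theta'}[1])$ be the subcomplex of normal cochains. Then $H^k(\bar C^l)=0$ for all $k>0$; in particular $H^1(\bar C^l)=0$.
   Context: For a real antisymmetric $n\times n$ matrix $\theta$, $A_\theta$ is the unital dg-algebra over $\mathbb{R}$ generated by $x^1,\dots,x^n$ (degree $0$) and $\xi^1,\dots,\xi^n$ (degree $1$) with relations $x^ix^j-x^jx^i=\theta^{ij}$, $x^i\xi^j=\xi^jx^i$, $\xi^i\xi^j=0$, and differential $dx^i=\xi^i$, $d\xi^i=0$ (graded Leibniz rule). As a vector space $A_\theta$ is the space of polynomials $a_0(x)+a_i(x)\xi^i$ in commuting $x$'s at most linear in the $\xi$'s. $A_\theta[1]$ is the degree shift ($A_\theta[1]_k=(A_\theta)_{k+1}$), $B^l(A_\theta)=A_\theta[1]^{\otimes l}$ carries the differential induced by $d$ (with Koszul signs), and $C^l=\bigoplus_k\mathrm{Hom}^k(B^l(A_\theta),A_{\theta'}[1])$, where $\mathrm{Hom}^k$ consists of linear maps raising degree by $k$, with differential $d_l(f)=f\circ d$. A cochain $f\in C^l$ is normal if $f(a_1,\dots,a_l)=0$ whenever some $a_i$ equals $1\in A_\theta$; normal cochains form a subcomplex $\bar C^l$. *)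

theory Defs
  imports Complex_Main
begin

text \<open>Elements of A_theta as a real vector space: a_0(x) + a_i(x) xi^i.
  An element a is stored by its coefficients: a None alpha is the coefficient of the
  monomial x^alpha in a_0, and a (Some i) alpha that of x^alpha in a_i (i < n).\<close>

type_synonym elt = "nat option \<Rightarrow> (nat \<Rightarrow> nat) \<Rightarrow> real"

definition antisym_mat :: "nat \<Rightarrow> (nat \<Rightarrow> nat \<Rightarrow> real) \<Rightarrow> bool" where
  "antisym_mat n th = (\<forall>i<n. \<forall>j<n. th i j = - th j i)"

definition Aset :: "nat \<Rightarrow> elt set" where
  "Aset n = {a. finite {(e, \<alpha>). a e \<alpha> \<noteq> 0} \<and>
     (\<forall>e \<alpha>. a e \<alpha> \<noteq> 0 \<longrightarrow> (\<forall>j\<ge>n. \<alpha> j = 0) \<and> (\<forall>i. e = Some i \<longrightarrow> i < n))}"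

definition zeroA :: elt where "zeroA = (\<lambda>e \<alpha>. 0)"
definition addA :: "elt \<Rightarrow> elt \<Rightarrow> elt" where "addA a b = (\<lambda>e \<alpha>. a e \<alpha> + b e \<alpha>)"
definition scaleA :: "real \<Rightarrow> elt \<Rightarrow> elt" where "scaleA c a = (\<lambda>e \<alpha>. c * a e \<alpha>)"

definition sumA :: "nat \<Rightarrow> (nat \<Rightarrow> elt) \<Rightarrow> elt" where
  "sumA m F = (\<lambda>e \<alpha>. \<Sum>i<m. F i e \<alpha>)"

definition unitA :: elt where
  "unitA = (\<lambda>e \<alpha>. if e = None \<and> \<alpha> = (\<lambda>_. 0) then 1 else 0)"

definition is_hom :: "elt \<Rightarrow> int \<Rightarrow> bool" where
  "is_hom a d = (if d = 0 then (\<forall>i \<alpha>. a (Some i) \<alpha> = 0)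
                 else if d = 1 then (\<forall>\<alpha>. a None \<alpha> = 0)
                 else a = zeroA)"

text \<open>Differential d(a_0 + a_i xi^i) = (d_j a_0) xi^j.\<close>
definition dA :: "nat \<Rightarrow> elt \<Rightarrow> elt" where
  "dA n a = (\<lambda>e \<alpha>. case e of None \<Rightarrow> 0
      | Some j \<Rightarrow> if j < n then real (Suc (\<alpha> j)) * a None (\<alpha>(j := Suc (\<alpha> j))) else 0)"

text \<open>Koszul sign for passing d across an element of A_theta[1]: (-1)^{|a|-1}.\<close>
definition sgnA :: "elt \<Rightarrow> elt" where
  "sgnA a = (\<lambda>e \<alpha>. if e = None then - a e \<alpha> else a e \<alpha>)"

text \<open>Cochains in Hom(B^l(A_theta), A_theta'[1]) are represented as multilinear maps
  on l-tuples (lists of length l) of elements.\<close>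
definition args :: "nat \<Rightarrow> nat \<Rightarrow> elt list set" where
  "args n l = {as. length as = l \<and> set as \<subseteq> Aset n}"

definition multilinear :: "nat \<Rightarrow> nat \<Rightarrow> (elt list \<Rightarrow> elt) \<Rightarrow> bool" where
  "multilinear n l f = (\<forall>as \<in> args n l. \<forall>i<l. \<forall>b \<in> Aset n. \<forall>c \<in> Aset n. \<forall>r s.
     f (as[i := addA (scaleA r b) (scaleA s c)]) =
       addA (scaleA r (f (as[i := b]))) (scaleA s (f (as[i := c]))))"

text \<open>Hom^k: multilinear maps raising degree by k, where A_theta[1]_m = (A_theta)_{m+1}.
  On homogeneous arguments of A_theta-degrees ds, the input has B^l-degree
  sum (d_i - 1), and the output must lie in A_theta'[1] in degree that plus k,
  i.e. in (A_theta')_{sum (d_i - 1) + k + 1}.\<close>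
definition cochain :: "nat \<Rightarrow> nat \<Rightarrow> int \<Rightarrow> (elt list \<Rightarrow> elt) \<Rightarrow> bool" where
  "cochain n l k f = ((\<forall>as \<in> args n l. f as \<in> Aset n) \<and> multilinear n l f \<and>
     (\<forall>as \<in> args n l. \<forall>ds. length ds = l \<and> set ds \<subseteq> {0, 1} \<and>
        (\<forall>i<l. is_hom (as ! i) (ds ! i)) \<longrightarrow>
        is_hom (f as) (sum_list ds - int l + k + 1)))"

definition normal :: "nat \<Rightarrow> nat \<Rightarrow> (elt list \<Rightarrow> elt) \<Rightarrow> bool" where
  "normal n l f = (\<forall>as \<in> args n l. unitA \<in> set as \<longrightarrow> f as = zeroA)"

text \<open>d_l(f) = f o d, d on B^l with Koszul signs.\<close>
definition dB :: "nat \<Rightarrow> (elt list \<Rightarrow> elt) \<Rightarrow> (elt list \<Rightarrow> elt)" where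
  "dB n f = (\<lambda>as. sumA (length as)
      (\<lambda>i. f (map sgnA (take i as) @ dA n (as ! i) # drop (Suc i) as)))"

end

theory Submission
  imports Defs
begin

text \<open>
  The differential of C^l only involves the differential of A_\<theta>, and as a complex
  (A_\<theta>, d) does not depend on \<theta>: it is the complex of polynomial functions and 1-forms
  on R^n truncated by \<xi>^i \<xi>^j = 0. The Euler homotopy h, with h (x^\<beta> \<xi>^j) =
  x^(\<beta> + e_j) / (|\<beta>| + 1), satisfies d h + h d = id - P, where P a consists of the
  constant term of a and a 1-form. Extending h to B^l in the usual way,
  H = \<Sum>_i (\<plusminus>P)^(\<otimes>i) \<otimes> h \<otimes> id^(\<otimes>(l-i-1)), gives (f \<circ> H) \<circ> d = f - f \<circ> P^(\<otimes>l)
  for every cocycle f. If f is normal, f \<circ> P^(\<otimes>l) only sees the 1-form parts, and on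
  l arguments of degree 1 a cochain of degree k > 0 takes values of degree k + 1 \<ge> 2 in
  A_\<theta>', which vanish. So f is the coboundary of the normal cochain f \<circ> H of degree k - 1.
\<close>

lemma elt_eqI:
  "(\<And>\<alpha>. a None \<alpha> = b None \<alpha>) \<Longrightarrow> (\<And>i \<alpha>. a (Some i) \<alpha> = b (Some i) \<alpha>) \<Longrightarrow> a = (b::elt)"
proof (intro ext)
  fix e \<alpha> assume "\<And>\<alpha>. a None \<alpha> = b None \<alpha>" "\<And>i \<alpha>. a (Some i) \<alpha> = b (Some i) \<alpha>"
  then show "a e \<alpha> = b e \<alpha>" by (cases e) simp_all
qed

lemma addA_apply [simp]: "addA a b e \<alpha> = a e \<alpha> + b e \<alpha>" by (simp add: addA_def)
lemma scaleA_apply [simp]: "scaleA c a e \<alpha> = c * a e \<alpha>" by (simp add: scaleA_def)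
lemma zeroA_apply [simp]: "zeroA e \<alpha> = 0" by (simp add: zeroA_def)
lemma sumA_apply [simp]: "sumA m F e \<alpha> = (\<Sum>i<m. F i e \<alpha>)" by (simp add: sumA_def)
lemma sgnA_None [simp]: "sgnA a None \<alpha> = - a None \<alpha>" by (simp add: sgnA_def)
lemma sgnA_Some [simp]: "sgnA a (Some i) \<alpha> = a (Some i) \<alpha>" by (simp add: sgnA_def)
lemma unitA_None: "unitA None \<alpha> = (if \<alpha> = (\<lambda>_. 0) then 1 else 0)" by (simp add: unitA_def)
lemma unitA_Some [simp]: "unitA (Some i) \<alpha> = 0" by (simp add: unitA_def)
lemma dA_None [simp]: "dA n a None \<alpha> = 0" by (simp add: dA_def)
lemma dA_Some:
  "dA n a (Some j) \<alpha> = (if j < n then real (Suc (\<alpha> j)) * a None (\<alpha>(j := Suc (\<alpha> j))) else 0)"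
  by (simp add: dA_def)

lemma scaleA_zeroA [simp]: "scaleA c zeroA = zeroA" by (intro ext) simp
lemma scaleA_one [simp]: "scaleA 1 a = a" by (intro ext) simp
lemma addA_zeroA [simp]: "addA a zeroA = a" by (intro ext) simp
lemma sgnA_sgnA [simp]: "sgnA (sgnA a) = a" by (rule elt_eqI) simp_all
lemma dA_dA [simp]: "dA n (dA n a) = zeroA" by (rule elt_eqI) (simp_all add: dA_Some)
lemma sgnA_dA [simp]: "sgnA (dA n a) = dA n a" by (rule elt_eqI) simp_all
lemma dA_sgnA: "dA n (sgnA a) = scaleA (-1) (dA n a)" by (rule elt_eqI) (simp_all add: dA_Some)

lemma fun_upd_Suc_neq_zero [simp]: "\<alpha>(j := Suc m) \<noteq> (\<lambda>_. 0)"
  by (auto dest: fun_cong[where x = j])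

lemma dA_unitA [simp]: "dA n unitA = zeroA"
  by (rule elt_eqI) (simp_all add: dA_Some unitA_None)

lemma sumA_cong: "(\<And>i. i < m \<Longrightarrow> F i = G i) \<Longrightarrow> sumA m F = sumA m G"
  by (simp add: sumA_def)

lemma Aset_finite_slice: "a \<in> Aset n \<Longrightarrow> finite {\<alpha>. a e \<alpha> \<noteq> 0}"
proof -
  assume "a \<in> Aset n"
  then have "finite {(e, \<alpha>). a e \<alpha> \<noteq> 0}" by (simp add: Aset_def)
  then have "finite (Pair e -` {(e, \<alpha>). a e \<alpha> \<noteq> 0})" by (rule finite_vimageI) (simp add: inj_on_def)
  then show ?thesis by (simp add: vimage_def)
qed

lemma Aset_nonzero_vars: "a \<in> Aset n \<Longrightarrow> a e \<alpha> \<noteq> 0 \<Longrightarrow> n \<le> j \<Longrightarrow> \<alpha> j = 0"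
  by (simp add: Aset_def)

lemma Aset_vanish_beyond:
  assumes "a \<in> Aset n" "j < n" "a e (\<alpha>(j := m)) \<noteq> 0" and "n \<le> j'"
  shows "\<alpha> j' = 0"
  using Aset_nonzero_vars[of a n e "\<alpha>(j := m)" j'] assms by simp

lemma Aset_if_support_subset:
  assumes "a \<in> Aset n" "b \<in> Aset n" "\<And>e \<alpha>. c e \<alpha> \<noteq> 0 \<Longrightarrow> a e \<alpha> \<noteq> 0 \<or> b e \<alpha> \<noteq> 0"
  shows "c \<in> Aset n"
proof -
  have "{(e, \<alpha>). c e \<alpha> \<noteq> 0} \<subseteq> {(e, \<alpha>). a e \<alpha> \<noteq> 0} \<union> {(e, \<alpha>). b e \<alpha> \<noteq> 0}"
    using assms(3) by auto
  then have "finite {(e, \<alpha>). c e \<alpha> \<noteq> 0}"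
    using assms(1,2) by (auto simp: Aset_def intro: finite_subset)
  then show ?thesis using assms unfolding Aset_def by blast
qed

lemma Aset_addA [simp]: "a \<in> Aset n \<Longrightarrow> b \<in> Aset n \<Longrightarrow> addA a b \<in> Aset n"
  by (rule Aset_if_support_subset[of a n b]) auto

lemma Aset_scaleA [simp]: "a \<in> Aset n \<Longrightarrow> scaleA c a \<in> Aset n"
  by (rule Aset_if_support_subset[of a n a]) auto

lemma Aset_sgnA [simp]: "a \<in> Aset n \<Longrightarrow> sgnA a \<in> Aset n"
  by (rule Aset_if_support_subset[of a n a]) (simp_all add: sgnA_def split: if_splits)

lemma Aset_zeroA [simp]: "zeroA \<in> Aset n"
  by (simp add: Aset_def)

lemma Aset_unitA [simp]: "unitA \<in> Aset n"
proof -
  have "{(e, \<alpha>). unitA e \<alpha> \<noteq> 0} \<subseteq> {(None, \<lambda>_. 0)}" by (auto simp: unitA_def split: if_splits)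
  then have "finite {(e, \<alpha>). unitA e \<alpha> \<noteq> 0}" by (rule finite_subset) simp
  then show ?thesis by (auto simp: Aset_def unitA_def split: if_splits)
qed

lemma Aset_sumA [simp]: "(\<And>i. i < m \<Longrightarrow> F i \<in> Aset n) \<Longrightarrow> sumA m F \<in> Aset n"
proof (induction m)
  case 0
  then show ?case by (simp add: sumA_def flip: zeroA_def)
next
  case (Suc m)
  have "sumA (Suc m) F = addA (sumA m F) (F m)" by (intro ext) simp
  then show ?case by (simp only:) (intro Aset_addA Suc; simp)
qed

lemma dA_nonzeroE:
  assumes "dA n a e \<alpha> \<noteq> 0"
  obtains j where "e = Some j" "j < n" "a None (\<alpha>(j := Suc (\<alpha> j))) \<noteq> 0"
  using assms by (cases e) (auto simp: dA_Some split: if_splits)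

lemma Aset_dA [simp]:
  assumes a: "a \<in> Aset n"
  shows "dA n a \<in> Aset n"
proof -
  have "{(e, \<alpha>). dA n a e \<alpha> \<noteq> 0} \<subseteq>
      (\<Union>j<n. (\<lambda>\<beta>. (Some j, \<beta>(j := \<beta> j - 1))) ` {\<beta>. a None \<beta> \<noteq> 0})"
  proof clarify
    fix e \<alpha> assume "dA n a e \<alpha> \<noteq> 0"
    then obtain j where "e = Some j" "j < n" "a None (\<alpha>(j := Suc (\<alpha> j))) \<noteq> 0"
      by (rule dA_nonzeroE)
    then show "(e, \<alpha>) \<in> (\<Union>j<n. (\<lambda>\<beta>. (Some j, \<beta>(j := \<beta> j - 1))) ` {\<beta>. a None \<beta> \<noteq> 0})"
      by (intro UN_I[of j] image_eqI[where x = "\<alpha>(j := Suc (\<alpha> j))"]) auto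
  qed
  then have "finite {(e, \<alpha>). dA n a e \<alpha> \<noteq> 0}"
    by (rule finite_subset) (simp add: Aset_finite_slice[OF a])
  moreover have "(\<forall>j'\<ge>n. \<alpha> j' = 0) \<and> (\<forall>i. e = Some i \<longrightarrow> i < n)" if "dA n a e \<alpha> \<noteq> 0" for e \<alpha>
    using that by (elim dA_nonzeroE) (auto intro: Aset_vanish_beyond[OF a])
  ultimately show ?thesis by (simp add: Aset_def)
qed

subsection \<open>The Euler homotopy\<close>

text \<open>On monomials h (x^\<beta> \<xi>^j) = x^(\<beta> + e_j) / (|\<beta>| + 1), read off at \<alpha> = \<beta> + e_j;
  for \<alpha> = 0 both the sum and the denominator vanish.\<close>
definition htpA :: "nat \<Rightarrow> elt \<Rightarrow> elt" where
  "htpA n a = (\<lambda>e \<alpha>. case e of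
      None \<Rightarrow> (\<Sum>j<n. if 0 < \<alpha> j then a (Some j) (\<alpha>(j := \<alpha> j - 1)) else 0) / real (\<Sum>j<n. \<alpha> j)
    | Some _ \<Rightarrow> 0)"

definition projA :: "nat \<Rightarrow> elt \<Rightarrow> elt" where
  "projA n a = (\<lambda>e \<alpha>. a e \<alpha> - dA n (htpA n a) e \<alpha> - htpA n (dA n a) e \<alpha>)"

definition sprojA :: "nat \<Rightarrow> elt \<Rightarrow> elt" where
  "sprojA n a = sgnA (projA n a)"

lemma htpA_None:
  "htpA n a None \<alpha> =
    (\<Sum>j<n. if 0 < \<alpha> j then a (Some j) (\<alpha>(j := \<alpha> j - 1)) else 0) / real (\<Sum>j<n. \<alpha> j)"
  by (simp add: htpA_def)

lemma htpA_Some [simp]: "htpA n a (Some i) \<alpha> = 0"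
  by (simp add: htpA_def)

lemma projA_apply: "projA n a e \<alpha> = a e \<alpha> - dA n (htpA n a) e \<alpha> - htpA n (dA n a) e \<alpha>"
  by (simp add: projA_def)

lemma htpA_nonzeroE:
  assumes "htpA n a e \<alpha> \<noteq> 0"
  obtains j where "e = None" "j < n" "0 < \<alpha> j" "a (Some j) (\<alpha>(j := \<alpha> j - 1)) \<noteq> 0"
proof -
  have e: "e = None" using assms by (cases e) auto
  then have "(\<Sum>j<n. if 0 < \<alpha> j then a (Some j) (\<alpha>(j := \<alpha> j - 1)) else 0) \<noteq> 0"
    using assms by (simp add: htpA_None)
  then obtain j where "j < n" "(if 0 < \<alpha> j then a (Some j) (\<alpha>(j := \<alpha> j - 1)) else 0) \<noteq> 0"
    by (auto elim: sum.not_neutral_contains_not_neutral)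
  then show ?thesis using that e by (simp split: if_splits)
qed

lemma Aset_htpA [simp]:
  assumes a: "a \<in> Aset n"
  shows "htpA n a \<in> Aset n"
proof -
  have "{(e, \<alpha>). htpA n a e \<alpha> \<noteq> 0} \<subseteq>
      (\<Union>j<n. (\<lambda>\<beta>. (None, \<beta>(j := Suc (\<beta> j)))) ` {\<beta>. a (Some j) \<beta> \<noteq> 0})"
  proof clarify
    fix e \<alpha> assume "htpA n a e \<alpha> \<noteq> 0"
    then obtain j where "e = None" "j < n" "0 < \<alpha> j" "a (Some j) (\<alpha>(j := \<alpha> j - 1)) \<noteq> 0"
      by (rule htpA_nonzeroE)
    then show "(e, \<alpha>) \<in> (\<Union>j<n. (\<lambda>\<beta>. (None, \<beta>(j := Suc (\<beta> j)))) ` {\<beta>. a (Some j) \<beta> \<noteq> 0})"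
      by (intro UN_I[of j] image_eqI[where x = "\<alpha>(j := \<alpha> j - 1)"]) auto
  qed
  then have "finite {(e, \<alpha>). htpA n a e \<alpha> \<noteq> 0}"
    by (rule finite_subset) (simp add: Aset_finite_slice[OF a])
  moreover have "(\<forall>j'\<ge>n. \<alpha> j' = 0) \<and> (\<forall>i. e = Some i \<longrightarrow> i < n)" if "htpA n a e \<alpha> \<noteq> 0" for e \<alpha>
    using that by (elim htpA_nonzeroE) (auto intro: Aset_vanish_beyond[OF a])
  ultimately show ?thesis by (simp add: Aset_def)
qed

lemma Aset_projA [simp]: "a \<in> Aset n \<Longrightarrow> projA n a \<in> Aset n"
proof -
  assume "a \<in> Aset n"
  moreover have "projA n a = addA a (scaleA (-1) (addA (dA n (htpA n a)) (htpA n (dA n a))))"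
    by (intro ext) (simp add: projA_def)
  ultimately show ?thesis by simp
qed

lemma Aset_sprojA [simp]: "a \<in> Aset n \<Longrightarrow> sprojA n a \<in> Aset n"
  by (simp add: sprojA_def)

lemma projA_decomp: "a = addA (projA n a) (addA (dA n (htpA n a)) (htpA n (dA n a)))"
  by (intro ext) (simp add: projA_apply)

text \<open>Euler's identity \<Sum>_j x_j \<partial>_j x^\<alpha> = |\<alpha>| x^\<alpha>.\<close>
lemma htpA_dA_None:
  assumes a: "a \<in> Aset n" and \<alpha>: "\<alpha> \<noteq> (\<lambda>_. 0)"
  shows "htpA n (dA n a) None \<alpha> = a None \<alpha>"
proof -
  have "(if 0 < \<alpha> j then dA n a (Some j) (\<alpha>(j := \<alpha> j - 1)) else 0) = real (\<alpha> j) * a None \<alpha>"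
    if "j < n" for j
    using that by (cases "0 < \<alpha> j") (simp_all add: dA_Some fun_upd_idem)
  then have "htpA n (dA n a) None \<alpha> = real (\<Sum>j<n. \<alpha> j) * a None \<alpha> / real (\<Sum>j<n. \<alpha> j)"
    by (simp add: htpA_None sum_distrib_right)
  also have "\<dots> = a None \<alpha>"
  proof (cases "(\<Sum>j<n. \<alpha> j) = 0")
    case True
    obtain j where "\<alpha> j \<noteq> 0" using \<alpha> by auto
    with True have "n \<le> j" by (meson finite_lessThan lessThan_iff not_le sum_eq_0_iff)
    with \<open>\<alpha> j \<noteq> 0\<close> have "a None \<alpha> = 0" by (metis Aset_nonzero_vars[OF a])
    then show ?thesis by simp
  qed (simp del: of_nat_sum)
  finally show ?thesis .
qed

definition linA :: "(elt \<Rightarrow> elt) \<Rightarrow> bool" where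
  "linA T \<longleftrightarrow>
    (\<forall>r s b c. T (addA (scaleA r b) (scaleA s c)) = addA (scaleA r (T b)) (scaleA s (T c)))"

lemma linAD: "linA T \<Longrightarrow> T (addA (scaleA r b) (scaleA s c)) = addA (scaleA r (T b)) (scaleA s (T c))"
  by (simp add: linA_def)

lemma linA_scaleA: "linA T \<Longrightarrow> T (scaleA c a) = scaleA c (T a)"
  using linAD[of T c a 0 a] by (simp add: addA_def scaleA_def)

lemma linA_id [simp]: "linA (\<lambda>x. x)"
  by (simp add: linA_def)

lemma linA_sgnA [simp]: "linA sgnA"
  unfolding linA_def by (intro allI, rule elt_eqI) (simp_all add: algebra_simps)

lemma linA_dA [simp]: "linA (dA n)"
  unfolding linA_def by (intro allI, rule elt_eqI) (simp_all add: dA_Some algebra_simps)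

lemma linA_htpA [simp]: "linA (htpA n)"
  unfolding linA_def
proof (intro allI, rule elt_eqI)
  fix r s :: real and b c :: elt and \<alpha> :: "nat \<Rightarrow> nat"
  let ?S = "\<lambda>a. \<Sum>j<n. if 0 < \<alpha> j then a (Some j) (\<alpha>(j := \<alpha> j - 1)) else 0"
  have "?S (addA (scaleA r b) (scaleA s c)) =
      (\<Sum>j<n. r * (if 0 < \<alpha> j then b (Some j) (\<alpha>(j := \<alpha> j - 1)) else 0)
        + s * (if 0 < \<alpha> j then c (Some j) (\<alpha>(j := \<alpha> j - 1)) else 0))"
    by (intro sum.cong) auto
  also have "\<dots> = r * ?S b + s * ?S c"
    by (simp add: sum.distrib sum_distrib_left)
  finally have "?S (addA (scaleA r b) (scaleA s c)) = r * ?S b + s * ?S c" .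
  then show "htpA n (addA (scaleA r b) (scaleA s c)) None \<alpha> =
      addA (scaleA r (htpA n b)) (scaleA s (htpA n c)) None \<alpha>"
    by (simp add: htpA_None add_divide_distrib)
qed simp

lemma linA_projA [simp]: "linA (projA n)"
  unfolding linA_def
  by (intro allI ext) (simp add: projA_apply linAD[OF linA_dA] linAD[OF linA_htpA] algebra_simps)

lemma linA_sprojA [simp]: "linA (sprojA n)"
  using linA_projA[of n] linA_sgnA unfolding linA_def sprojA_def by simp

lemma projA_None_nonconst: "a \<in> Aset n \<Longrightarrow> \<alpha> \<noteq> (\<lambda>_. 0) \<Longrightarrow> projA n a None \<alpha> = 0"
  by (simp add: projA_apply htpA_dA_None)

lemma htpA_zeroA [simp]: "htpA n zeroA = zeroA"
  by (rule elt_eqI) (simp_all add: htpA_None cong: if_cong)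

lemma dA_zeroA [simp]: "dA n zeroA = zeroA"
  by (rule elt_eqI) (simp_all add: dA_Some)

lemma htpA_sgnA [simp]: "htpA n (sgnA a) = htpA n a"
  by (rule elt_eqI) (simp_all add: htpA_None cong: if_cong)

lemma sgnA_htpA: "sgnA (htpA n a) = scaleA (-1) (htpA n a)"
  by (rule elt_eqI) simp_all

lemma projA_sgnA: "projA n (sgnA a) = sgnA (projA n a)"
  by (rule elt_eqI) (simp_all add: projA_apply dA_sgnA linA_scaleA)

lemma sgnA_sprojA [simp]: "sgnA (sprojA n a) = projA n a"
  by (simp add: sprojA_def)

lemma sprojA_sgnA: "sprojA n (sgnA a) = projA n a"
  by (simp add: sprojA_def projA_sgnA)

lemma dA_sprojA: "dA n (sprojA n a) = scaleA (-1) (sprojA n (dA n a))"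
  by (rule elt_eqI) (simp_all add: sprojA_def projA_apply dA_Some algebra_simps)

lemma is_hom_zeroA [simp]: "is_hom zeroA d"
  by (simp add: is_hom_def)

lemma is_hom_htpA: "is_hom (htpA n a) 0"
  by (simp add: is_hom_def)

lemma htpA_even: "is_hom a 0 \<Longrightarrow> htpA n a = zeroA"
  by (rule elt_eqI) (simp_all add: is_hom_def htpA_None cong: if_cong)

lemma dA_odd: "is_hom a 1 \<Longrightarrow> dA n a = zeroA"
  by (rule elt_eqI) (simp_all add: is_hom_def dA_Some)

lemma is_hom_sprojA:
  assumes "is_hom a d" "d \<in> {0, 1}"
  shows "is_hom (sprojA n a) d"
proof (cases "d = 0")
  case True
  with assms have "htpA n a = zeroA" by (simp add: htpA_even)
  with True assms show ?thesis by (simp add: is_hom_def sprojA_def projA_apply)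
next
  case False
  with assms have "d = 1" by simp
  with assms have "dA n a = zeroA" by (simp add: dA_odd)
  with \<open>d = 1\<close> assms show ?thesis by (simp add: is_hom_def sprojA_def projA_apply)
qed

lemma is_hom_sumA: "(\<And>i. i < m \<Longrightarrow> is_hom (F i) d) \<Longrightarrow> is_hom (sumA m F) d"
  by (auto simp: is_hom_def sumA_def zeroA_def)

lemma htpA_unitA [simp]: "htpA n unitA = zeroA"
  by (rule htpA_even) (simp add: is_hom_def)

lemma sprojA_unitA: "sprojA n unitA = scaleA (-1) unitA"
  by (intro elt_eqI) (simp_all add: sprojA_def projA_apply)

subsection \<open>Tuples and the tensor homotopy\<close>

definition tuple :: "nat \<Rightarrow> (nat \<Rightarrow> elt) \<Rightarrow> elt list" where
  "tuple l T = map T [0..<l]"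

lemma length_tuple [simp]: "length (tuple l T) = l"
  by (simp add: tuple_def)

lemma nth_tuple [simp]: "t < l \<Longrightarrow> tuple l T ! t = T t"
  by (simp add: tuple_def)

lemma tuple_in_args: "(\<And>t. t < l \<Longrightarrow> T t \<in> Aset n) \<Longrightarrow> tuple l T \<in> args n l"
  by (auto simp: tuple_def args_def)

lemma tuple_cong: "(\<And>t. t < l \<Longrightarrow> T t = T' t) \<Longrightarrow> tuple l T = tuple l T'"
  by (simp add: tuple_def)

lemma tuple_update: "i < l \<Longrightarrow> (tuple l T)[i := x] = tuple l (T(i := x))"
  by (rule nth_equalityI) (auto simp: nth_list_update)

lemma in_set_tuple: "t < l \<Longrightarrow> T t \<in> set (tuple l T)"
  by (simp add: tuple_def)

lemma tuple_nth_tuple: "tuple l (\<lambda>t. F t (tuple l X ! t)) = tuple l (\<lambda>t. F t (X t))"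
  by (intro tuple_cong) simp

lemma args_eq_tuple: "as \<in> args n l \<Longrightarrow> as = tuple l (\<lambda>t. as ! t)"
  by (rule nth_equalityI) (auto simp: args_def)

lemma args_nth: "as \<in> args n l \<Longrightarrow> t < l \<Longrightarrow> as ! t \<in> Aset n"
  by (auto simp: args_def)

text \<open>The operators applied to the t-th factor in the j-th term of d on B^l and in the
  i-th term of the tensor homotopy. The factors before slot j (resp. i) pick up the Koszul sign
  of the odd operator d (resp. h) passing them, hence sgnA and sprojA = sgnA \<circ> projA.\<close>
definition dslot :: "nat \<Rightarrow> nat \<Rightarrow> nat \<Rightarrow> elt \<Rightarrow> elt" where
  "dslot n j t = (if t < j then sgnA else if t = j then dA n else (\<lambda>x. x))"

definition hslot :: "nat \<Rightarrow> nat \<Rightarrow> nat \<Rightarrow> elt \<Rightarrow> elt" where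
  "hslot n i t = (if t < i then sprojA n else if t = i then htpA n else (\<lambda>x. x))"

lemma dslot_less: "t < j \<Longrightarrow> dslot n j t = sgnA" by (simp add: dslot_def)
lemma dslot_same [simp]: "dslot n j j = dA n" by (simp add: dslot_def)
lemma dslot_greater: "j < t \<Longrightarrow> dslot n j t x = x" by (simp add: dslot_def)
lemma hslot_less: "t < i \<Longrightarrow> hslot n i t = sprojA n" by (simp add: hslot_def)
lemma hslot_same [simp]: "hslot n i i = htpA n" by (simp add: hslot_def)
lemma hslot_greater: "i < t \<Longrightarrow> hslot n i t x = x" by (simp add: hslot_def)

lemma Aset_dslot [simp]: "x \<in> Aset n \<Longrightarrow> dslot n j t x \<in> Aset n" by (simp add: dslot_def)
lemma Aset_hslot [simp]: "x \<in> Aset n \<Longrightarrow> hslot n i t x \<in> Aset n" by (simp add: hslot_def)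
lemma linA_hslot [simp]: "linA (hslot n i t)" by (simp add: hslot_def)

lemma dB_tuple: "dB n f as = sumA (length as) (\<lambda>j. f (tuple (length as) (\<lambda>t. dslot n j t (as ! t))))"
  unfolding dB_def
proof (intro sumA_cong arg_cong[where f = f] nth_equalityI)
  fix j t assume "j < length as" "t < length (map sgnA (take j as) @ dA n (as ! j) # drop (Suc j) as)"
  then show "(map sgnA (take j as) @ dA n (as ! j) # drop (Suc j) as) ! t =
      tuple (length as) (\<lambda>t. dslot n j t (as ! t)) ! t"
    by (cases t j rule: linorder_cases) (auto simp: nth_append dslot_def nth_Cons' Suc_diff_Suc)
qed simp

definition htpB :: "nat \<Rightarrow> (elt list \<Rightarrow> elt) \<Rightarrow> elt list \<Rightarrow> elt" where
  "htpB n f as = sumA (length as) (\<lambda>i. f (tuple (length as) (\<lambda>t. hslot n i t (as ! t))))"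

lemma htpB_tuple: "htpB n f (tuple l T) = sumA l (\<lambda>i. f (tuple l (\<lambda>t. hslot n i t (T t))))"
  unfolding htpB_def length_tuple tuple_nth_tuple ..

locale multilinear_form =
  fixes n l :: nat and f :: "elt list \<Rightarrow> elt"
  assumes multilinear: "multilinear n l f"
begin

lemma f_slot_lin:
  assumes i: "i < l" and T: "\<And>t. t < l \<Longrightarrow> t \<noteq> i \<Longrightarrow> T t \<in> Aset n"
    and b: "b \<in> Aset n" and c: "c \<in> Aset n"
  shows "f (tuple l (T(i := addA (scaleA r b) (scaleA s c)))) =
    addA (scaleA r (f (tuple l (T(i := b))))) (scaleA s (f (tuple l (T(i := c)))))"
proof -
  have "tuple l (T(i := b)) \<in> args n l" using T b by (intro tuple_in_args) auto
  with multilinear i b c have "f ((tuple l (T(i := b)))[i := addA (scaleA r b) (scaleA s c)]) =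
      addA (scaleA r (f ((tuple l (T(i := b)))[i := b]))) (scaleA s (f ((tuple l (T(i := b)))[i := c])))"
    unfolding multilinear_def by blast
  then show ?thesis by (simp only: tuple_update[OF i] fun_upd_upd)
qed

lemma f_slot_add:
  assumes "i < l" "\<And>t. t < l \<Longrightarrow> t \<noteq> i \<Longrightarrow> T t \<in> Aset n" "b \<in> Aset n" "c \<in> Aset n"
  shows "f (tuple l (T(i := addA b c))) = addA (f (tuple l (T(i := b)))) (f (tuple l (T(i := c))))"
  using f_slot_lin[OF assms, where r = 1 and s = 1] by simp

lemma f_slot_scale:
  assumes "i < l" "\<And>t. t < l \<Longrightarrow> t \<noteq> i \<Longrightarrow> T t \<in> Aset n" "b \<in> Aset n"
  shows "f (tuple l (T(i := scaleA r b))) = scaleA r (f (tuple l (T(i := b))))"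
proof -
  have "addA (scaleA r x) (scaleA 0 y) = scaleA r x" for x y by (intro ext) simp
  then show ?thesis using f_slot_lin[OF assms(1,2,3,3), where r = r and s = 0] by simp
qed

lemma f_slot_zero:
  assumes "i < l" "\<And>t. t < l \<Longrightarrow> t \<noteq> i \<Longrightarrow> T t \<in> Aset n"
  shows "f (tuple l (T(i := zeroA))) = zeroA"
  using f_slot_scale[OF assms Aset_zeroA, where r = 0] by (simp add: zeroA_def scaleA_def)

lemma f_slot_neg:
  assumes m: "m < l" and R: "\<And>t. t < l \<Longrightarrow> R t \<in> Aset n"
    and R': "\<And>t. t < l \<Longrightarrow> R' t = (if t = m then scaleA (-1) (R t) else R t)"
  shows "addA (f (tuple l R)) (f (tuple l R')) = zeroA"
proof -
  have "tuple l R' = tuple l (R(m := scaleA (-1) (R m)))" using R' by (intro tuple_cong) simp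
  also have "f \<dots> = scaleA (-1) (f (tuple l (R(m := R m))))"
    using f_slot_scale[OF m, of R "R m" "-1"] R m by simp
  finally show ?thesis by (intro ext) simp
qed

lemma multilinear_htpB: "multilinear n l (htpB n f)"
  unfolding multilinear_def
proof (intro ballI allI impI)
  fix as i b c r s assume as: "as \<in> args n l" and i: "i < l" and b: "b \<in> Aset n" and c: "c \<in> Aset n"
  define R where "R u = (\<lambda>t. hslot n u t (as ! t))" for u
  have R: "R u t \<in> Aset n" if "t < l" for u t using as that by (simp add: R_def args_nth)
  have upd: "htpB n f (as[i := y]) = sumA l (\<lambda>u. f (tuple l ((R u)(i := hslot n u i y))))" for y
  proof -
    have len: "length as = l" using as by (simp add: args_def)
    show ?thesis unfolding htpB_def R_def length_list_update len
      by (intro sumA_cong arg_cong[where f = f] tuple_cong) (simp add: nth_list_update len)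
  qed
  show "htpB n f (as[i := addA (scaleA r b) (scaleA s c)]) =
      addA (scaleA r (htpB n f (as[i := b]))) (scaleA s (htpB n f (as[i := c])))"
    unfolding upd using R b c
    by (intro ext) (simp add: linAD[OF linA_hslot] f_slot_lin[OF i] sum.distrib sum_distrib_left)
qed

text \<open>For i \<noteq> j the two composites differ by a Koszul sign in one slot; for i = j this is
  d h + h d = id - P in slot i.\<close>
lemma f_hslot_dslot_anticommute:
  assumes A: "\<And>t. t < l \<Longrightarrow> A t \<in> Aset n" and i: "i < l" and j: "j < l"
  shows "addA (f (tuple l (\<lambda>t. hslot n i t (dslot n j t (A t)))))
      (f (tuple l (\<lambda>t. dslot n j t (hslot n i t (A t))))) =
    (if i = j then addA (f (tuple l (\<lambda>t. if t < i then projA n (A t) else A t)))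
        (scaleA (-1) (f (tuple l (\<lambda>t. if t < Suc i then projA n (A t) else A t))))
     else zeroA)"
proof (cases i j rule: linorder_cases)
  case less
  then show ?thesis using A
    by (simp, intro f_slot_neg[OF i])
      (auto simp: hslot_less hslot_greater dslot_less dslot_greater sprojA_sgnA sgnA_htpA
        elim: linorder_neqE_nat)
next
  case greater
  then show ?thesis using A
    by (simp, intro f_slot_neg[OF j])
      (auto simp: hslot_less hslot_greater dslot_less dslot_greater sprojA_sgnA dA_sprojA
        elim: linorder_neqE_nat)
next
  case equal
  define B where "B t = (if t < i then projA n (A t) else A t)" for t
  have B: "B t \<in> Aset n" if "t < l" "t \<noteq> i" for t using A that by (simp add: B_def)
  have "f (tuple l B) =
      f (tuple l (B(i := addA (projA n (A i)) (addA (dA n (htpA n (A i))) (htpA n (dA n (A i)))))))"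
    by (intro arg_cong[where f = f] tuple_cong) (simp add: B_def flip: projA_decomp)
  also have "\<dots> = addA (f (tuple l (B(i := projA n (A i)))))
      (addA (f (tuple l (B(i := dA n (htpA n (A i)))))) (f (tuple l (B(i := htpA n (dA n (A i)))))))"
    using A i by (simp add: f_slot_add[OF i B])
  also have "tuple l (B(i := projA n (A i))) = tuple l (\<lambda>t. if t < Suc i then projA n (A t) else A t)"
    by (intro tuple_cong) (simp add: B_def)
  also have "tuple l (B(i := dA n (htpA n (A i)))) = tuple l (\<lambda>t. dslot n j t (hslot n i t (A t)))"
    using equal by (intro tuple_cong) (auto simp: B_def hslot_less hslot_greater dslot_less dslot_greater)
  also have "tuple l (B(i := htpA n (dA n (A i)))) = tuple l (\<lambda>t. hslot n i t (dslot n j t (A t)))"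
    using equal by (intro tuple_cong)
      (auto simp: B_def hslot_less hslot_greater dslot_less dslot_greater sprojA_sgnA)
  finally show ?thesis using equal unfolding B_def by (intro ext) simp
qed

text \<open>Off the diagonal the terms of H \<circ> d are those of d \<circ> H up to sign, which sum to zero
  since f is a cocycle; the diagonal terms telescope.\<close>
lemma dB_htpB:
  assumes cocycle: "\<forall>bs \<in> args n l. dB n f bs = zeroA" and as: "as \<in> args n l"
  shows "dB n (htpB n f) as = addA (f as) (scaleA (-1) (f (tuple l (\<lambda>t. projA n (as ! t)))))"
proof (intro ext)
  fix e \<alpha>
  define A where "A t = as ! t" for t
  have A: "A t \<in> Aset n" if "t < l" for t using as that by (simp add: A_def args_nth)
  define HD where "HD i j = f (tuple l (\<lambda>t. hslot n i t (dslot n j t (A t)))) e \<alpha>" for i j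
  define DH where "DH i j = f (tuple l (\<lambda>t. dslot n j t (hslot n i t (A t)))) e \<alpha>" for i j
  define Pfirst where "Pfirst i = f (tuple l (\<lambda>t. if t < i then projA n (A t) else A t)) e \<alpha>" for i
  have len: "length as = l" using as by (simp add: args_def)
  have DH: "(\<Sum>j<l. DH i j) = 0" if "i < l" for i
  proof -
    have "tuple l (\<lambda>t. hslot n i t (A t)) \<in> args n l" using A by (intro tuple_in_args) simp
    with cocycle have "dB n f (tuple l (\<lambda>t. hslot n i t (A t))) e \<alpha> = 0" by simp
    then show ?thesis unfolding dB_tuple DH_def length_tuple tuple_nth_tuple by simp
  qed
  have HD: "HD i j = (if i = j then Pfirst i - Pfirst (Suc i) else 0) - DH i j" if "i < l" "j < l" for i j
    using arg_cong[where f = "\<lambda>x. x e \<alpha>", OF f_hslot_dslot_anticommute[of A i j, OF A that]]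
    unfolding HD_def DH_def Pfirst_def by (cases "i = j") (simp_all add: algebra_simps)
  have "dB n (htpB n f) as e \<alpha> = (\<Sum>j<l. \<Sum>i<l. HD i j)"
    unfolding dB_tuple len htpB_tuple HD_def A_def by simp
  also have "\<dots> = (\<Sum>i<l. \<Sum>j<l. HD i j)" by (rule sum.swap)
  also have "\<dots> = (\<Sum>i<l. (Pfirst i - Pfirst (Suc i)) - (\<Sum>j<l. DH i j))"
    by (intro sum.cong refl) (simp add: HD sum_subtractf)
  also have "\<dots> = (\<Sum>i<l. Pfirst i - Pfirst (Suc i))"
    by (intro sum.cong refl) (simp add: DH)
  also have "\<dots> = Pfirst 0 - Pfirst l" by (rule sum_lessThan_telescope')
  also have "Pfirst 0 = f as e \<alpha>" unfolding Pfirst_def A_def by (simp flip: args_eq_tuple[OF as])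
  also have "Pfirst l = f (tuple l (\<lambda>t. projA n (as ! t))) e \<alpha>"
    unfolding Pfirst_def A_def by (simp cong: tuple_cong)
  finally show "dB n (htpB n f) as e \<alpha> =
      addA (f as) (scaleA (-1) (f (tuple l (\<lambda>t. projA n (as ! t))))) e \<alpha>" by simp
qed

end

lemma sum_list_update_ab_group:
  fixes xs :: "'a::ab_group_add list"
  shows "k < length xs \<Longrightarrow> sum_list (xs[k := x]) = sum_list xs - xs ! k + x"
  by (induction xs arbitrary: k) (auto split: nat.split)

lemma cochain_Aset: "cochain n l k f \<Longrightarrow> as \<in> args n l \<Longrightarrow> f as \<in> Aset n"
  by (simp add: cochain_def)

lemma cochain_is_hom:
  assumes "cochain n l k f" "as \<in> args n l" "length ds = l" "set ds \<subseteq> {0, 1}"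
    "\<And>i. i < l \<Longrightarrow> is_hom (as ! i) (ds ! i)"
  shows "is_hom (f as) (sum_list ds - int l + k + 1)"
  using assms unfolding cochain_def by blast

lemma is_hom_hslot:
  "is_hom a d \<Longrightarrow> d \<in> {0, 1} \<Longrightarrow> is_hom (hslot n u t a) (if t = u then 0 else d)"
  by (auto simp: hslot_def is_hom_htpA is_hom_sprojA)

definition xi_part :: "elt \<Rightarrow> elt" where
  "xi_part a = (\<lambda>e \<alpha>. if e = None then 0 else a e \<alpha>)"

lemma Aset_xi_part [simp]: "a \<in> Aset n \<Longrightarrow> xi_part a \<in> Aset n"
  by (rule Aset_if_support_subset[of a n a]) (simp_all add: xi_part_def split: if_splits)

lemma is_hom_xi_part: "is_hom (xi_part a) 1"
  by (simp add: is_hom_def xi_part_def)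

lemma const_plus_xi_part:
  assumes "\<And>\<alpha>. \<alpha> \<noteq> (\<lambda>_. 0) \<Longrightarrow> a None \<alpha> = 0"
  shows "a = addA (scaleA (a None (\<lambda>_. 0)) unitA) (scaleA 1 (xi_part a))"
  using assms by (intro elt_eqI) (auto simp: xi_part_def unitA_None)

context multilinear_form
begin

lemma normal_tuple_unitA:
  assumes "normal n l f" "\<And>t. t < l \<Longrightarrow> R t \<in> Aset n" "m < l" "R m = unitA"
  shows "f (tuple l R) = zeroA"
  using assms in_set_tuple[of m l R] tuple_in_args[of l R n] unfolding normal_def by auto

lemma normal_htpB:
  assumes normal: "normal n l f"
  shows "normal n l (htpB n f)"
  unfolding normal_def
proof (intro ballI impI)
  fix as assume as: "as \<in> args n l" and "unitA \<in> set as"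
  then obtain j where j: "j < l" "as ! j = unitA" by (auto simp: args_def in_set_conv_nth)
  have f_zero: "f (tuple l (\<lambda>t. hslot n i t (as ! t))) = zeroA" if i: "i < l" for i
  proof -
    define R where "R = (\<lambda>t. hslot n i t (as ! t))"
    have R: "R t \<in> Aset n" if "t < l" for t using as that by (simp add: R_def args_nth)
    have "f (tuple l R) = zeroA"
    proof (cases i j rule: linorder_cases)
      case less
      then show ?thesis
        using normal R j by (intro normal_tuple_unitA[where m = j]) (simp_all add: R_def hslot_greater)
    next
      case equal
      then have "tuple l R = tuple l (R(j := zeroA))" using j by (intro tuple_cong) (simp add: R_def)
      then show ?thesis using f_slot_zero[OF j(1), of R] R by simp
    next
      case greater
      then have "tuple l R = tuple l (R(j := scaleA (-1) unitA))"
        using j by (intro tuple_cong) (simp add: R_def hslot_less sprojA_unitA)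
      then show ?thesis
        using f_slot_scale[OF j(1), of R unitA "-1"] normal_tuple_unitA[OF normal, of "R(j := unitA)" j]
          R j
        by simp
    qed
    then show ?thesis by (simp add: R_def)
  qed
  have "htpB n f as = sumA l (\<lambda>i. f (tuple l (\<lambda>t. hslot n i t (as ! t))))"
    by (subst args_eq_tuple[OF as]) (simp add: htpB_tuple)
  also have "\<dots> = zeroA" using f_zero by (intro ext) simp
  finally show "htpB n f as = zeroA" .
qed

lemma normal_f_eq_xi_parts:
  assumes normal: "normal n l f" and T: "\<And>t. t < l \<Longrightarrow> T t \<in> Aset n"
    and const: "\<And>t \<alpha>. t < l \<Longrightarrow> \<alpha> \<noteq> (\<lambda>_. 0) \<Longrightarrow> T t None \<alpha> = 0"
  shows "f (tuple l T) = f (tuple l (\<lambda>t. xi_part (T t)))"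
proof -
  have "f (tuple l T) = f (tuple l (\<lambda>t. if t < m then xi_part (T t) else T t))" if "m \<le> l" for m
    using that
  proof (induction m)
    case (Suc m)
    define R where "R t = (if t < m then xi_part (T t) else T t)" for t
    have R: "R t \<in> Aset n" if "t < l" for t using T that by (simp add: R_def)
    have m: "m < l" using Suc.prems by simp
    have "f (tuple l R) =
        f (tuple l (R(m := addA (scaleA (T m None (\<lambda>_. 0)) unitA) (scaleA 1 (xi_part (T m))))))"
      using const_plus_xi_part[of "T m"] const m
      by (intro arg_cong[where f = f] tuple_cong) (simp add: R_def)
    also have "\<dots> = addA (scaleA (T m None (\<lambda>_. 0)) (f (tuple l (R(m := unitA)))))
        (scaleA 1 (f (tuple l (R(m := xi_part (T m))))))"
      using R T m by (intro f_slot_lin[OF m]) auto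
    also have "f (tuple l (R(m := unitA))) = zeroA"
      using R m by (intro normal_tuple_unitA[OF normal, where m = m]) auto
    also have "tuple l (R(m := xi_part (T m))) = tuple l (\<lambda>t. if t < Suc m then xi_part (T t) else T t)"
      by (intro tuple_cong) (simp add: R_def)
    finally show ?case using Suc by (simp add: R_def)
  qed simp
  from this[of l] show ?thesis by (simp cong: tuple_cong)
qed

lemma cochain_vanishes_on_projA:
  assumes cochain: "cochain n l k f" and normal: "normal n l f" and k: "0 < k"
    and A: "\<And>t. t < l \<Longrightarrow> A t \<in> Aset n"
  shows "f (tuple l (\<lambda>t. projA n (A t))) = zeroA"
proof -
  have "is_hom (f (tuple l (\<lambda>t. xi_part (projA n (A t))))) (sum_list (replicate l 1) - int l + k + 1)"
    using A by (intro cochain_is_hom[OF cochain] tuple_in_args)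
      (simp_all add: is_hom_xi_part set_replicate_conv_if)
  then have "f (tuple l (\<lambda>t. xi_part (projA n (A t)))) = zeroA"
    using k by (simp add: is_hom_def sum_list_replicate)
  then show ?thesis
    using A by (subst normal_f_eq_xi_parts[OF normal]) (simp_all add: projA_None_nonconst)
qed

lemma cochain_htpB:
  assumes cochain: "cochain n l k f"
  shows "cochain n l (k - 1) (htpB n f)"
  unfolding cochain_def
proof (intro conjI ballI allI impI)
  fix as assume as: "as \<in> args n l"
  then have htpB_as: "htpB n f as = sumA l (\<lambda>u. f (tuple l (\<lambda>t. hslot n u t (as ! t))))"
    by (subst args_eq_tuple[OF as]) (simp add: htpB_tuple)
  have args_u: "tuple l (\<lambda>t. hslot n u t (as ! t)) \<in> args n l" for u
    using as by (intro tuple_in_args) (simp add: args_nth)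
  show "htpB n f as \<in> Aset n"
    unfolding htpB_as using args_u by (intro Aset_sumA cochain_Aset[OF cochain])
  fix ds assume ds: "length ds = l \<and> set ds \<subseteq> {0, 1} \<and> (\<forall>i<l. is_hom (as ! i) (ds ! i))"
  then have ds01: "ds ! t \<in> {0, 1}" if "t < l" for t using that by (auto dest: nth_mem)
  show "is_hom (htpB n f as) (sum_list ds - int l + (k - 1) + 1)"
    unfolding htpB_as
  proof (rule is_hom_sumA)
    fix u assume u: "u < l"
    show "is_hom (f (tuple l (\<lambda>t. hslot n u t (as ! t)))) (sum_list ds - int l + (k - 1) + 1)"
    proof (cases "ds ! u = 0")
      case True
      then have "htpA n (as ! u) = zeroA" using ds u by (intro htpA_even) metis
      then have "tuple l (\<lambda>t. hslot n u t (as ! t)) = tuple l ((\<lambda>t. hslot n u t (as ! t))(u := zeroA))"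
        by (intro tuple_cong) simp
      then show ?thesis using f_slot_zero[OF u] as by (simp add: args_nth)
    next
      case False
      with ds01[OF u] have "ds ! u = 1" by simp
      have "is_hom (hslot n u t (as ! t)) (ds[u := 0] ! t)" if "t < l" for t
        using is_hom_hslot[of "as ! t" "ds ! t" n u t] ds ds01[OF that] that u
        by (auto simp: nth_list_update)
      moreover have "set (ds[u := 0]) \<subseteq> {0, 1}"
        using ds set_update_subset_insert[of ds u 0] by auto
      ultimately have "is_hom (f (tuple l (\<lambda>t. hslot n u t (as ! t))))
          (sum_list (ds[u := 0]) - int l + k + 1)"
        using ds by (intro cochain_is_hom[OF cochain args_u]) simp_all
      then show ?thesis using ds u \<open>ds ! u = 1\<close> by (simp add: sum_list_update_ab_group)
    qed
  qed
qed (use multilinear_htpB in simp)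

end

theorem mainTheorem4:
  fixes n l :: nat and \<theta> \<theta>' :: "nat \<Rightarrow> nat \<Rightarrow> real" and k :: int
  assumes "antisym_mat n \<theta>" and "antisym_mat n \<theta>'" and "l \<ge> 1" and "k > 0"
  shows "\<forall>f. cochain n l k f \<and> normal n l f \<and> (\<forall>as \<in> args n l. dB n f as = zeroA) \<longrightarrow>
           (\<exists>g. cochain n l (k - 1) g \<and> normal n l g \<and> (\<forall>as \<in> args n l. dB n g as = f as))"
proof (intro allI impI)
  fix f assume "cochain n l k f \<and> normal n l f \<and> (\<forall>as \<in> args n l. dB n f as = zeroA)"
  then have cochain: "cochain n l k f" and normal: "normal n l f"
    and cocycle: "\<forall>as \<in> args n l. dB n f as = zeroA" by auto
  interpret multilinear_form n l f
    using cochain by unfold_locales (simp add: cochain_def)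
  have "dB n (htpB n f) as = f as" if as: "as \<in> args n l" for as
  proof -
    have "f (tuple l (\<lambda>t. projA n (as ! t))) = zeroA"
      using as \<open>k > 0\<close> by (intro cochain_vanishes_on_projA[OF cochain normal]) (simp_all add: args_nth)
    then show ?thesis using dB_htpB[OF cocycle as] by simp
  qed
  then show "\<exists>g. cochain n l (k - 1) g \<and> normal n l g \<and> (\<forall>as \<in> args n l. dB n g as = f as)"
    using cochain_htpB[OF cochain] normal_htpB[OF normal] by blast
qed

end
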